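(* Let $G$ be a finite simple undirected graph, $r<s$ positive integers, and run set-k on $(G,r,s)$. For every positive integer $k$ for which the transition time $t_k$ is defined, every $k$-$(r,s)$-nucleus $\mathcal{S}$ of $G$ satisfies $\mathcal{S}\subseteq\mathcal{S}_{t_k}$.
   Context: A $K_r$ is an $r$-clique of $G$. For a set $\mathcal{S}$ of $K_s$s: $K_r(\mathcal{S})$ is the set of $K_r$s contained in some member of $\mathcal{S}$; the $\mathcal{S}$-degree of $R\in K_r(\mathcal{S})$ is the number of $S\in\mathcal{S}$ containing $R$; $R,R'$ are $\mathcal{S}$-connected if there is a sequence $R=R_1,\dots,R_m=R'$ in $K_r(\mathcal{S})$ with each $R_i\cup R_{i+1}$ contained in some $S\in\mathcal{S}$. A $k$-$(r,s)$-nucleus is a set $\mathcal{S}$ of $K_s$s, maximal under inclusion among those such that every $R\in K_r(\mathcal{S})$ has $\mathcal{S}$-degree $\ge k$ and any two members of $K_r(\mathcal{S})$ are $\mathcal{S}$-connected. Procedure set-k$(G,r,s)$: enumerate all $K_r$s and $K_s$s; initialize $\delta(R)$ to the number of $K_s$s containing $R$; all $K_r$s unprocessed. Repeat until all processed: pick an unprocessed $K_r$ $R$ with minimum current $\delta(R)$ (ties arbitrary); set $\kappa(R)=\delta(R)$; for each $K_s$ $S\ni R$ such that no $K_r\subset S$ is processed, and for each $K_r$ $R'\subset S$, $R'\neq R$, with $\delta(R')>\delta(R)$, decrease $\delta(R')$ by 1; mark $R$ processed. $R_i$ is the $i$-th processed $K_r$; "time $t$" is the beginning of the iteration processing $R_t$.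 The transition time $t_k$ is the unique index with $\kappa(R_{t_k})=k$ and ($t_k=1$ or $\kappa(R_{t_k-1})<k$). $\mathcal{S}_t$ is the set of $K_s$s all of whose $K_r$s are unprocessed at time $t$. *)

theory Defs
  imports Main
begin

definition simple_graph :: "'a set \<Rightarrow> ('a \<Rightarrow> 'a \<Rightarrow> bool) \<Rightarrow> bool" where
  "simple_graph V E \<longleftrightarrow> finite V \<and> (\<forall>x y. E x y \<longrightarrow> E y x) \<and> (\<forall>x. \<not> E x x)
     \<and> (\<forall>x y. E x y \<longrightarrow> x \<in> V \<and> y \<in> V)"

definition cliques :: "'a set \<Rightarrow> ('a \<Rightarrow> 'a \<Rightarrow> bool) \<Rightarrow> nat \<Rightarrow> 'a set set" where
  "cliques V E r = {C. C \<subseteq> V \<and> card C = r \<and> (\<forall>x\<in>C. \<forall>y\<in>C. x \<noteq> y \<longrightarrow> E x y)}"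

text \<open>A run of set-k is encoded by the list rs of K_r's in processing order
  (rs ! t is the (t+1)-th processed K_r, indices are 0-based).
  delta V E r s rs t R is the value of delta(R) at the beginning of the
  iteration processing rs ! t.  Inside one iteration, delta(R') is decremented
  once per qualifying K_s as long as delta(R') > delta(R); hence the max.\<close>
fun delta :: "'a set \<Rightarrow> ('a \<Rightarrow> 'a \<Rightarrow> bool) \<Rightarrow> nat \<Rightarrow> nat \<Rightarrow> 'a set list \<Rightarrow> nat \<Rightarrow> 'a set \<Rightarrow> nat" where
  "delta V E r s rs 0 R = card {S \<in> cliques V E s. R \<subseteq> S}"
| "delta V E r s rs (Suc t) R' =
     (let R = rs ! t;
          d = delta V E r s rs t;
          c = card {S \<in> cliques V E s. R \<subseteq> S \<and> R' \<subseteq> S \<and>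
                       (\<forall>Q \<in> set (take t rs). \<not> Q \<subseteq> S)}
      in if R' \<noteq> R \<and> d R' > d R then max (d R) (d R' - c) else d R')"

definition setk_run :: "'a set \<Rightarrow> ('a \<Rightarrow> 'a \<Rightarrow> bool) \<Rightarrow> nat \<Rightarrow> nat \<Rightarrow> 'a set list \<Rightarrow> bool" where
  "setk_run V E r s rs \<longleftrightarrow> distinct rs \<and> set rs = cliques V E r \<and>
     (\<forall>t < length rs. \<forall>R \<in> set (drop t rs). delta V E r s rs t (rs ! t) \<le> delta V E r s rs t R)"

definition kappa :: "'a set \<Rightarrow> ('a \<Rightarrow> 'a \<Rightarrow> bool) \<Rightarrow> nat \<Rightarrow> nat \<Rightarrow> 'a set list \<Rightarrow> nat \<Rightarrow> nat" where
  "kappa V E r s rs t = delta V E r s rs t (rs ! t)"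

text \<open>t is the (0-based) transition time t_k.\<close>
definition transition_time :: "'a set \<Rightarrow> ('a \<Rightarrow> 'a \<Rightarrow> bool) \<Rightarrow> nat \<Rightarrow> nat \<Rightarrow> 'a set list \<Rightarrow> nat \<Rightarrow> nat \<Rightarrow> bool" where
  "transition_time V E r s rs k t \<longleftrightarrow> t < length rs \<and> kappa V E r s rs t = k \<and>
     (t = 0 \<or> kappa V E r s rs (t - 1) < k)"

definition S_at :: "'a set \<Rightarrow> ('a \<Rightarrow> 'a \<Rightarrow> bool) \<Rightarrow> nat \<Rightarrow> nat \<Rightarrow> 'a set list \<Rightarrow> nat \<Rightarrow> 'a set set" where
  "S_at V E r s rs t = {S \<in> cliques V E s. \<forall>Q \<in> set (take t rs). \<not> Q \<subseteq> S}"

definition Kr_of :: "nat \<Rightarrow> 'a set set \<Rightarrow> 'a set set" where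
  "Kr_of r SS = {R. card R = r \<and> (\<exists>S \<in> SS. R \<subseteq> S)}"

definition sdeg :: "'a set set \<Rightarrow> 'a set \<Rightarrow> nat" where
  "sdeg SS R = card {S \<in> SS. R \<subseteq> S}"

definition s_step :: "nat \<Rightarrow> 'a set set \<Rightarrow> 'a set \<Rightarrow> 'a set \<Rightarrow> bool" where
  "s_step r SS R R' \<longleftrightarrow> R \<in> Kr_of r SS \<and> R' \<in> Kr_of r SS \<and> (\<exists>S \<in> SS. R \<union> R' \<subseteq> S)"

definition s_connected :: "nat \<Rightarrow> 'a set set \<Rightarrow> 'a set \<Rightarrow> 'a set \<Rightarrow> bool" where
  "s_connected r SS R R' \<longleftrightarrow> (s_step r SS)\<^sup>*\<^sup>* R R'"

definition nucleus_cond :: "'a set \<Rightarrow> ('a \<Rightarrow> 'a \<Rightarrow> bool) \<Rightarrow> nat \<Rightarrow> nat \<Rightarrow> nat \<Rightarrow> 'a set set \<Rightarrow> bool" where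
  "nucleus_cond V E r s k SS \<longleftrightarrow> SS \<subseteq> cliques V E s \<and>
     (\<forall>R \<in> Kr_of r SS. sdeg SS R \<ge> k) \<and>
     (\<forall>R \<in> Kr_of r SS. \<forall>R' \<in> Kr_of r SS. s_connected r SS R R')"

definition is_nucleus :: "'a set \<Rightarrow> ('a \<Rightarrow> 'a \<Rightarrow> bool) \<Rightarrow> nat \<Rightarrow> nat \<Rightarrow> nat \<Rightarrow> 'a set set \<Rightarrow> bool" where
  "is_nucleus V E r s k SS \<longleftrightarrow> nucleus_cond V E r s k SS \<and>
     (\<forall>TT. nucleus_cond V E r s k TT \<and> SS \<subseteq> TT \<longrightarrow> TT = SS)"

end

theory Submission
  imports Defs
begin

text \<open>Every decrement of delta(R) removes a K_s containing R from S_t (the max in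
  delta only slows the decrease), so the S_t-degree of R never exceeds delta_t(R).
  Set-k processes K_r's in nondecreasing kappa order. If a nucleus left S_{t_k},
  look at the first time j < t_k at which a K_r of it is processed: the whole
  nucleus still lies in S_j, so its degree condition gives kappa_j \<ge> k,
  contradicting kappa_{t_k - 1} < k.\<close>

lemma finite_cliques: "finite V \<Longrightarrow> finite (cliques V E s)"
  unfolding cliques_def by (rule finite_subset[of _ "Pow V"]) auto

lemma S_at_Suc:
  "t < length rs \<Longrightarrow> S_at V E r s rs (Suc t) = {S \<in> S_at V E r s rs t. \<not> rs ! t \<subseteq> S}"
  unfolding S_at_def by (auto simp: take_Suc_conv_app_nth)

lemma sdeg_S_at_le_delta:
  assumes "finite V" and "t \<le> length rs"
  shows "sdeg (S_at V E r s rs t) R' \<le> delta V E r s rs t R'"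
  using assms(2)
proof (induction t arbitrary: R')
  case 0
  then show ?case by (simp add: sdeg_def S_at_def)
next
  case (Suc t)
  have t: "t < length rs" using Suc.prems by simp
  define R where "R = rs ! t"
  define d where "d = delta V E r s rs t"
  define A where "A = {S \<in> S_at V E r s rs t. R' \<subseteq> S}"
  define B where "B = {S \<in> A. R \<subseteq> S}"
  have "finite A"
    unfolding A_def S_at_def using finite_cliques[OF assms(1)] by auto
  then have card_A_B: "card (A - B) = card A - card B"
    by (intro card_Diff_subset) (auto simp: B_def intro: finite_subset)
  have sdeg_Suc: "sdeg (S_at V E r s rs (Suc t)) R' = card (A - B)"
    unfolding sdeg_def S_at_Suc[OF t] A_def B_def R_def by (rule arg_cong[where f = card]) auto
  have IH: "card A \<le> d R'"
    using Suc.IH[of R'] t by (simp add: A_def d_def sdeg_def)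
  have "{S \<in> cliques V E s. R \<subseteq> S \<and> R' \<subseteq> S \<and> (\<forall>Q \<in> set (take t rs). \<not> Q \<subseteq> S)} = B"
    unfolding B_def A_def S_at_def by auto
  then have delta_Suc: "delta V E r s rs (Suc t) R' =
      (if R' \<noteq> R \<and> d R' > d R then max (d R) (d R' - card B) else d R')"
    by (simp add: R_def d_def Let_def)
  show ?case
    unfolding sdeg_Suc delta_Suc using IH card_A_B by (cases "R' = R") (auto simp: le_max_iff_disj)
qed

lemma kappa_Suc_ge:
  assumes run: "setk_run V E r s rs" and t: "Suc t < length rs"
  shows "kappa V E r s rs t \<le> kappa V E r s rs (Suc t)"
proof -
  define d where "d = delta V E r s rs t"
  have "rs ! Suc t \<in> set (drop t rs)"
    using nth_mem[of 1 "drop t rs"] t by simp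
  then have "d (rs ! t) \<le> d (rs ! Suc t)"
    using run t unfolding setk_run_def d_def by auto
  then show ?thesis
    unfolding kappa_def d_def by (auto simp: Let_def)
qed

lemma kappa_mono:
  assumes run: "setk_run V E r s rs" and "i \<le> j" and "j < length rs"
  shows "kappa V E r s rs i \<le> kappa V E r s rs j"
  using assms(2,3)
proof (induction j rule: dec_induct)
  case (step n)
  then show ?case using kappa_Suc_ge[OF run, of n] by simp
qed simp

lemma subset_S_at_if_untouched:
  assumes "SS \<subseteq> cliques V E s" and "\<forall>l < j. \<forall>S \<in> SS. \<not> rs ! l \<subseteq> S"
  shows "SS \<subseteq> S_at V E r s rs j"
  using assms unfolding S_at_def by (auto simp: in_set_conv_nth)

lemma kappa_ge_if_dense_survives:
  assumes "finite V" and "setk_run V E r s rs" and j: "j < length rs"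
    and SS: "SS \<subseteq> S_at V E r s rs j" and dense: "\<forall>R \<in> Kr_of r SS. k \<le> sdeg SS R"
    and S: "S \<in> SS" "rs ! j \<subseteq> S"
  shows "k \<le> kappa V E r s rs j"
proof -
  have "rs ! j \<in> cliques V E r"
    using assms(2) j unfolding setk_run_def by (metis nth_mem)
  with S have "rs ! j \<in> Kr_of r SS"
    unfolding Kr_of_def cliques_def by auto
  with dense have "k \<le> sdeg SS (rs ! j)" by blast
  also have "\<dots> \<le> sdeg (S_at V E r s rs j) (rs ! j)"
    unfolding sdeg_def using SS finite_cliques[OF assms(1)]
    by (intro card_mono) (auto simp: S_at_def)
  also have "\<dots> \<le> kappa V E r s rs j"
    unfolding kappa_def using sdeg_S_at_le_delta[OF assms(1)] j by simp
  finally show ?thesis .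
qed

theorem claim3:
  fixes V :: "'a set" and E :: "'a \<Rightarrow> 'a \<Rightarrow> bool" and r s k t :: nat
    and rs :: "'a set list" and SS :: "'a set set"
  assumes "simple_graph V E"
    and "0 < r" and "r < s"
    and "setk_run V E r s rs"
    and "0 < k"
    and "transition_time V E r s rs k t"
    and "is_nucleus V E r s k SS"
  shows "SS \<subseteq> S_at V E r s rs t"
proof (rule ccontr)
  have fin: "finite V" using assms(1) by (simp add: simple_graph_def)
  have t: "t < length rs" "kappa V E r s rs t = k" "t = 0 \<or> kappa V E r s rs (t - 1) < k"
    using assms(6) unfolding transition_time_def by auto
  have SS: "SS \<subseteq> cliques V E s" "\<forall>R \<in> Kr_of r SS. k \<le> sdeg SS R"
    using assms(7) unfolding is_nucleus_def nucleus_cond_def by auto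
  assume "\<not> SS \<subseteq> S_at V E r s rs t"
  then have "\<exists>j. j < t \<and> (\<exists>S \<in> SS. rs ! j \<subseteq> S)"
    using subset_S_at_if_untouched[OF SS(1)] by blast
  then obtain j where least: "j < t \<and> (\<exists>S \<in> SS. rs ! j \<subseteq> S)"
      "\<forall>l < j. \<not> (l < t \<and> (\<exists>S \<in> SS. rs ! l \<subseteq> S))"
    using exists_least_iff[of "\<lambda>j. j < t \<and> (\<exists>S \<in> SS. rs ! j \<subseteq> S)"] by blast
  then obtain S where j: "j < t" "S \<in> SS" "rs ! j \<subseteq> S"
    by blast
  from least have first: "\<forall>l < j. \<forall>S \<in> SS. \<not> rs ! l \<subseteq> S"
    by auto
  have "k \<le> kappa V E r s rs j"
    using kappa_ge_if_dense_survives[OF fin assms(4) _ subset_S_at_if_untouched[OF SS(1) first]]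
      SS(2) j t(1) by simp
  also have "\<dots> \<le> kappa V E r s rs (t - 1)"
    using kappa_mono[OF assms(4)] j t(1) by simp
  finally show False using t(3) j by simp
qed

end
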